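(* Let $d_0 \geq 2$ and $n\ge 6$, and let $\mathcal{H}$ be a $[3]$-graph on $n$ vertices such that every pair $u,v$ of non-adjacent vertices satisfies $d_{\partial \mathcal{H}}(u) + d_{\partial \mathcal{H}}(v) \geq n + d_0$. Suppose $\mathcal{H}$ contains a Hamiltonian Berge path but no Hamiltonian Berge cycle. Then $\mathcal{H}$ contains a Berge cycle of length $n-1$ or $n-2$.
   Context: A $[3]$-graph is a hypergraph in which every edge has at most $3$ vertices. Two distinct vertices are adjacent if some edge contains both; $d_{\partial\mathcal{H}}(u)$ is the number of vertices adjacent to $u$. A Berge path of length $t$ is a sequence of $t$ distinct edges $e_1,\dots,e_t$ and $t+1$ distinct vertices $v_1,\dots,v_{t+1}$ with $\{v_i,v_{i+1}\}\subseteq e_i$ for all $i$; it is Hamiltonian if $\{v_1,\dots,v_{t+1}\}=V(\mathcal{H})$. A Berge cycle of length $t$ is a collection of $t$ distinct edges $e_1,\dots,e_t$ and $t$ distinct vertices $v_1,\dots,v_t$ with $\{v_i,v_{i+1}\}\subseteq e_i$ for all $i\in[t]$, where $v_{t+1}=v_1$; it is Hamiltonian if it has length $n$. *)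

theory Defs
  imports Main
begin

definition is_3graph :: "'a set \<Rightarrow> 'a set set \<Rightarrow> bool" where
  "is_3graph V E \<longleftrightarrow> finite V \<and> (\<forall>e\<in>E. e \<subseteq> V \<and> card e \<le> 3)"

definition hadj :: "'a set set \<Rightarrow> 'a \<Rightarrow> 'a \<Rightarrow> bool" where
  "hadj E u v \<longleftrightarrow> u \<noteq> v \<and> (\<exists>e\<in>E. {u, v} \<subseteq> e)"

definition shadow_deg :: "'a set \<Rightarrow> 'a set set \<Rightarrow> 'a \<Rightarrow> nat" where
  "shadow_deg V E u = card {v \<in> V. hadj E u v}"

definition berge_path :: "'a set \<Rightarrow> 'a set set \<Rightarrow> 'a set list \<Rightarrow> 'a list \<Rightarrow> bool" where
  "berge_path V E es vs \<longleftrightarrow>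
     length vs = length es + 1 \<and> distinct es \<and> distinct vs \<and>
     set es \<subseteq> E \<and> set vs \<subseteq> V \<and>
     (\<forall>i < length es. {vs ! i, vs ! (i + 1)} \<subseteq> es ! i)"

definition ham_berge_path :: "'a set \<Rightarrow> 'a set set \<Rightarrow> bool" where
  "ham_berge_path V E \<longleftrightarrow> (\<exists>es vs. berge_path V E es vs \<and> set vs = V)"

definition berge_cycle :: "'a set \<Rightarrow> 'a set set \<Rightarrow> nat \<Rightarrow> 'a set list \<Rightarrow> 'a list \<Rightarrow> bool" where
  "berge_cycle V E t es vs \<longleftrightarrow>
     length es = t \<and> length vs = t \<and> distinct es \<and> distinct vs \<and>
     set es \<subseteq> E \<and> set vs \<subseteq> V \<and>
     (\<forall>i < t. {vs ! i, vs ! ((i + 1) mod t)} \<subseteq> es ! i)"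

definition has_berge_cycle :: "'a set \<Rightarrow> 'a set set \<Rightarrow> nat \<Rightarrow> bool" where
  "has_berge_cycle V E t \<longleftrightarrow> (\<exists>es vs. berge_cycle V E t es vs)"

end

theory Submission
  imports Defs
begin

(* Let v_0 ... v_(n-1) be a Hamiltonian Berge path with edges e_0 ... e_(n-2).  As edges have
   at most three vertices, e_j contains at most one vertex besides v_j and v_(j+1).
   If v_0 and v_(n-1) share an edge f, then f is a path edge (else the path closes to a
   Hamiltonian cycle), hence f = e_0 or f = e_(n-2), and f closes the path minus one end into a
   cycle of length n - 1.
   Otherwise the degree condition gives at least three indices i with v_0 ~ v_(i+1) and
   v_(n-1) ~ v_i, and e_0, e_(n-2) spoil at most one of them each.  For the remaining i the
   edges f through v_0, v_(i+1) and g through v_(n-1), v_i can only be path edges at v_(i+1)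
   resp. v_i; skipping at most one vertex at each side yields the cycle
   v_0 ... v_a, g, v_(n-1) ... v_b, f of length n, n - 1 or n - 2, and n is excluded. *)

lemma hadj_irrefl: "\<not> hadj E u u"
  unfolding hadj_def by simp

lemma hadj_commute: "hadj E u v \<longleftrightarrow> hadj E v u"
  unfolding hadj_def by (auto simp: insert_commute)

lemma shadow_deg_conv_indices:
  assumes "distinct vs" "set vs = V"
  shows "shadow_deg V E u = card {k. k < length vs \<and> hadj E u (vs ! k)}"
proof -
  have "{v \<in> V. hadj E u v} = (!) vs ` {k. k < length vs \<and> hadj E u (vs ! k)}"
    using assms(2) by (auto simp: in_set_conv_nth)
  moreover have "inj_on ((!) vs) {k. k < length vs \<and> hadj E u (vs ! k)}"
    using assms(1) by (auto simp: inj_on_def nth_eq_iff_index_eq)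
  ultimately show ?thesis
    unfolding shadow_deg_def by (simp add: card_image)
qed

lemma in_set_take_conv_nth:
  "x \<in> set (take m xs) \<longleftrightarrow> (\<exists>j < m. j < length xs \<and> xs ! j = x)"
  by (auto simp: in_set_conv_nth)

lemma in_set_drop_conv_nth:
  "x \<in> set (drop m xs) \<longleftrightarrow> (\<exists>j \<ge> m. j < length xs \<and> xs ! j = x)"
proof
  assume "x \<in> set (drop m xs)"
  then obtain i where "i < length xs - m" "x = xs ! (m + i)"
    by (auto simp: in_set_conv_nth)
  then show "\<exists>j \<ge> m. j < length xs \<and> xs ! j = x"
    by (intro exI[of _ "m + i"]) auto
next
  assume "\<exists>j \<ge> m. j < length xs \<and> xs ! j = x"
  then obtain j where "m \<le> j" "j < length xs" "xs ! j = x" by blast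
  then show "x \<in> set (drop m xs)"
    using nth_mem[of "j - m" "drop m xs"] by simp
qed

lemma berge_path_length: "berge_path V E es vs \<Longrightarrow> length vs = length es + 1"
  unfolding berge_path_def by simp

lemma berge_path_close:
  assumes "berge_path V E es vs" "f \<in> E" "f \<notin> set es" "{last vs, hd vs} \<subseteq> f"
  shows "berge_cycle V E (length vs) (es @ [f]) vs"
proof -
  have len: "length vs = length es + 1" and "vs \<noteq> []"
    using assms(1) unfolding berge_path_def by auto
  have "{vs ! i, vs ! ((i + 1) mod length vs)} \<subseteq> (es @ [f]) ! i" if "i < length vs" for i
  proof (cases "i < length es")
    case True
    then show ?thesis using assms(1) len unfolding berge_path_def by (auto simp: nth_append)
  next
    case False
    then have "i = length es" using that len by simp
    then show ?thesis using assms(4) len \<open>vs \<noteq> []\<close> by (auto simp: last_conv_nth hd_conv_nth)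
  qed
  then show ?thesis using assms len unfolding berge_path_def berge_cycle_def by auto
qed

lemma berge_path_append:
  assumes "berge_path V E es1 vs1" "berge_path V E es2 vs2"
    and "set vs1 \<inter> set vs2 = {}" "set es1 \<inter> set es2 = {}"
    and "g \<in> E" "g \<notin> set es1" "g \<notin> set es2" "{last vs1, hd vs2} \<subseteq> g"
  shows "berge_path V E (es1 @ g # es2) (vs1 @ vs2)"
proof -
  have len1: "length vs1 = length es1 + 1" and len2: "length vs2 = length es2 + 1"
    and "vs1 \<noteq> []" "vs2 \<noteq> []"
    using assms(1,2) unfolding berge_path_def by auto
  have "{(vs1 @ vs2) ! i, (vs1 @ vs2) ! (i + 1)} \<subseteq> (es1 @ g # es2) ! i"
    if i_lt: "i < length (es1 @ g # es2)" for i
  proof -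
    consider "i < length es1" | "i = length es1" | "length es1 < i" by linarith
    then show ?thesis
    proof cases
      case 1
      then show ?thesis using assms(1) len1 unfolding berge_path_def by (auto simp: nth_append)
    next
      case 2
      then show ?thesis using assms(8) len1 \<open>vs1 \<noteq> []\<close> \<open>vs2 \<noteq> []\<close>
        by (simp add: nth_append last_conv_nth hd_conv_nth)
    next
      case 3
      then obtain k where "i = Suc (length es1 + k)" using less_imp_Suc_add by blast
      then show ?thesis using assms(2) len1 i_lt unfolding berge_path_def by (auto simp: nth_append)
    qed
  qed
  then show ?thesis using assms len1 len2 unfolding berge_path_def by auto
qed

lemma berge_path_rev:
  assumes "berge_path V E es vs"
  shows "berge_path V E (rev es) (rev vs)"
proof -
  have len: "length vs = length es + 1" using assms unfolding berge_path_def by simp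
  have "{rev vs ! i, rev vs ! (i + 1)} \<subseteq> rev es ! i" if "i < length es" for i
  proof -
    let ?k = "length es - 1 - i"
    have "{vs ! ?k, vs ! (?k + 1)} \<subseteq> es ! ?k" using assms that unfolding berge_path_def by auto
    moreover have "rev vs ! i = vs ! (?k + 1)" "rev vs ! (i + 1) = vs ! ?k" "rev es ! i = es ! ?k"
      using that len by (auto simp: rev_nth Suc_diff_Suc)
    ultimately show ?thesis by auto
  qed
  then show ?thesis using assms len unfolding berge_path_def by auto
qed

lemma berge_path_take:
  assumes "berge_path V E es vs" "k \<le> length es"
  shows "berge_path V E (take k es) (take (k + 1) vs)"
  using assms unfolding berge_path_def by (auto dest: in_set_takeD)

lemma berge_path_drop:
  assumes "berge_path V E es vs" "k \<le> length es"
  shows "berge_path V E (drop k es) (drop k vs)"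
proof -
  have "{drop k vs ! i, drop k vs ! (i + 1)} \<subseteq> drop k es ! i" if "i < length (drop k es)" for i
    using assms that unfolding berge_path_def by (auto simp: add.assoc)
  then show ?thesis using assms unfolding berge_path_def by (auto dest: in_set_dropD)
qed

lemma berge_path_first_edge_cycle:
  assumes "berge_path V E es vs" "es \<noteq> []" "last vs \<in> hd es"
  shows "has_berge_cycle V E (length es)"
proof -
  have len: "length vs = length es + 1" using assms(1) by (rule berge_path_length)
  have "berge_path V E (drop 1 es) (drop 1 vs)"
    using berge_path_drop[OF assms(1), of 1] assms(2) by (simp add: Suc_le_eq)
  moreover have "hd es \<in> E" "hd es \<notin> set (drop 1 es)"
    using assms(1,2) unfolding berge_path_def by (auto simp: neq_Nil_conv)
  moreover have "{last (drop 1 vs), hd (drop 1 vs)} \<subseteq> hd es"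
    using assms(1-3) len unfolding berge_path_def
    by (auto simp: hd_drop_conv_nth hd_conv_nth)
  ultimately have "berge_cycle V E (length (drop 1 vs)) (drop 1 es @ [hd es]) (drop 1 vs)"
    by (rule berge_path_close)
  then show ?thesis using len unfolding has_berge_cycle_def by auto
qed

lemma berge_path_last_edge_cycle:
  assumes "berge_path V E es vs" "es \<noteq> []" "hd vs \<in> last es"
  shows "has_berge_cycle V E (length es)"
  using berge_path_first_edge_cycle[OF berge_path_rev[OF assms(1)]] assms(2,3)
  by (simp add: hd_rev last_rev)

lemma berge_path_crossing_cycle:
  assumes path: "berge_path V E es vs" and len: "length vs = n" and "a < b" "b < n"
    and "g \<in> E" "{vs ! a, vs ! (n - 1)} \<subseteq> g" "g \<notin> set (take a es)" "g \<notin> set (drop b es)"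
    and "f \<in> E" "{vs ! b, vs ! 0} \<subseteq> f" "f \<notin> set (take a es)" "f \<notin> set (drop b es)"
    and "f \<noteq> g"
  shows "has_berge_cycle V E (a + 1 + (n - b))"
proof -
  have len_es: "length vs = length es + 1" using path by (rule berge_path_length)
  have "distinct vs" "distinct es" using path unfolding berge_path_def by auto
  have "set (take (a + 1) vs) \<inter> set (rev (drop b vs)) = {}"
    "set (take a es) \<inter> set (rev (drop b es)) = {}"
    using set_take_disj_set_drop_if_distinct[OF \<open>distinct vs\<close>, of "a + 1" b]
      set_take_disj_set_drop_if_distinct[OF \<open>distinct es\<close>, of a b] \<open>a < b\<close> by auto
  moreover have "last (take (a + 1) vs) = vs ! a" "hd (rev (drop b vs)) = vs ! (n - 1)"
    using \<open>a < b\<close> \<open>b < n\<close> len by (simp_all add: take_Suc_conv_app_nth last_conv_nth hd_rev)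
  ultimately have joined:
    "berge_path V E (take a es @ g # rev (drop b es)) (take (a + 1) vs @ rev (drop b vs))"
    using berge_path_append[OF berge_path_take[OF path] berge_path_rev[OF berge_path_drop[OF path]]]
      assms(3-8) len len_es by auto
  moreover have "last (take (a + 1) vs @ rev (drop b vs)) = vs ! b"
    "hd (take (a + 1) vs @ rev (drop b vs)) = vs ! 0"
    using \<open>a < b\<close> \<open>b < n\<close> len by (simp_all add: last_rev hd_conv_nth nth_append)
  ultimately have "berge_cycle V E (length (take (a + 1) vs @ rev (drop b vs)))
      ((take a es @ g # rev (drop b es)) @ [f]) (take (a + 1) vs @ rev (drop b vs))"
    using berge_path_close[OF joined \<open>f \<in> E\<close>] assms(10-13) by simp
  moreover have "length (take (a + 1) vs @ rev (drop b vs)) = a + 1 + (n - b)"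
    using \<open>a < b\<close> \<open>b < n\<close> len by simp
  ultimately show ?thesis unfolding has_berge_cycle_def by metis
qed

(* If h is a path edge, it is one of the two edges at v_k; moving the attachment point
   across it keeps h off the path segment that the crossing cycle reuses. *)
lemma berge_path_attach_before:
  assumes "berge_path V E es vs" "0 < k" "k < length es" "vs ! k \<in> h"
    and only: "\<forall>j < length es. es ! j = h \<longrightarrow> k \<in> {j, Suc j}"
  obtains a where "a = k - 1 \<or> a = k" "vs ! a \<in> h"
    "h \<notin> set (take a es)" "h \<notin> set (drop (Suc k) es)"
proof -
  have after: "h \<notin> set (drop (Suc k) es)"
    using only by (auto simp: in_set_drop_conv_nth)
  show thesis
  proof (cases "h = es ! (k - 1)")
    case True
    then have "vs ! (k - 1) \<in> h"
      using assms(1-3) unfolding berge_path_def by auto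
    moreover have "h \<notin> set (take (k - 1) es)"
      using only by (auto simp: in_set_take_conv_nth)
    ultimately show thesis using that after by blast
  next
    case False
    then have "h \<notin> set (take k es)"
      using only by (auto simp: in_set_take_conv_nth)
    then show thesis using that after assms(4) by blast
  qed
qed

lemma berge_path_attach_after:
  assumes "berge_path V E es vs" "k < length es" "vs ! k \<in> h"
    and only: "\<forall>j < length es. es ! j = h \<longrightarrow> k \<in> {j, Suc j}"
  obtains b where "b = k \<or> b = Suc k" "vs ! b \<in> h"
    "h \<notin> set (take (k - 1) es)" "h \<notin> set (drop b es)"
proof -
  have before: "h \<notin> set (take (k - 1) es)"
    using only by (auto simp: in_set_take_conv_nth)
  show thesis
  proof (cases "h = es ! k")
    case True
    then have "vs ! Suc k \<in> h"
      using assms(1,2) unfolding berge_path_def by auto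
    moreover have "h \<notin> set (drop (Suc k) es)"
      using only by (auto simp: in_set_drop_conv_nth)
    ultimately show thesis using that before by blast
  next
    case False
    have "h \<notin> set (drop k es)"
    proof
      assume "h \<in> set (drop k es)"
      then obtain j where "k \<le> j" "j < length es" "es ! j = h"
        by (auto simp: in_set_drop_conv_nth)
      with only have "j = k" by fastforce
      with \<open>es ! j = h\<close> False show False by simp
    qed
    then show thesis using that before assms(3) by blast
  qed
qed

locale ham_path_3graph =
  fixes V :: "'a set" and E :: "'a set set" and es :: "'a set list" and vs :: "'a list"
    and n :: nat
  assumes three_graph: "is_3graph V E"
    and path: "berge_path V E es vs"
    and spanning: "set vs = V"
    and length_vs: "length vs = n"
begin

lemma length_es: "length es = n - 1"
  using berge_path_length[OF path] length_vs by simp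

lemma distinct_vs: "distinct vs"
  using path unfolding berge_path_def by simp

lemma path_edge: "j < n - 1 \<Longrightarrow> {vs ! j, vs ! Suc j} \<subseteq> es ! j"
  using path length_es unfolding berge_path_def by simp

lemma path_edge_in_E: "j < n - 1 \<Longrightarrow> es ! j \<in> E"
  using path length_es unfolding berge_path_def by auto

lemma path_edge_extra_vertex_unique:
  assumes "j < n - 1" "p < n" "q < n" "vs ! p \<in> es ! j" "vs ! q \<in> es ! j"
    and "p \<notin> {j, Suc j}" "q \<notin> {j, Suc j}"
  shows "p = q"
proof (rule ccontr)
  assume "p \<noteq> q"
  then have "card {vs ! j, vs ! Suc j, vs ! p, vs ! q} = 4"
    using assms distinct_vs length_vs by (simp add: nth_eq_iff_index_eq)
  moreover have "{vs ! j, vs ! Suc j, vs ! p, vs ! q} \<subseteq> es ! j"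
    using path_edge assms by simp
  moreover have "finite (es ! j)" "card (es ! j) \<le> 3"
    using three_graph path_edge_in_E[OF assms(1)] unfolding is_3graph_def
    by (auto intro: finite_subset)
  ultimately show False
    using card_mono[of "es ! j" "{vs ! j, vs ! Suc j, vs ! p, vs ! q}"] by simp
qed

lemma card_path_edge_extra_vertices:
  assumes "j < n - 1" "inj_on \<phi> A" "\<forall>i \<in> A. \<phi> i < n \<and> \<phi> i \<notin> {j, Suc j}"
  shows "card {i \<in> A. vs ! \<phi> i \<in> es ! j} \<le> 1"
proof -
  define S where "S = {i \<in> A. vs ! \<phi> i \<in> es ! j}"
  have "i = i'" if "i \<in> S" "i' \<in> S" for i i'
    using that path_edge_extra_vertex_unique[OF assms(1)] assms(2,3) unfolding S_def
    by (auto dest: inj_onD)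
  then have "card S \<le> 1"
    by (cases "finite S") (auto simp: card_le_Suc0_iff_eq)
  then show ?thesis
    unfolding S_def .
qed

lemma path_edge_at_vertex:
  assumes "p < n" "k < n" "p \<noteq> k" "vs ! p \<in> h" "vs ! k \<in> h"
    and "\<forall>j < n - 1. p \<in> {j, Suc j} \<longrightarrow> vs ! k \<notin> es ! j"
  shows "\<forall>j < length es. es ! j = h \<longrightarrow> k \<in> {j, Suc j}"
  using path_edge_extra_vertex_unique[of _ p k] assms length_es by auto

lemma adjacent_ends_cycle:
  assumes "hadj E (vs ! 0) (vs ! (n - 1))" "\<not> has_berge_cycle V E n"
  shows "has_berge_cycle V E (n - 1)"
proof -
  obtain f where f: "f \<in> E" "{vs ! 0, vs ! (n - 1)} \<subseteq> f"
    using assms(1) unfolding hadj_def by auto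
  have "0 < n - 1"
    using assms(1) unfolding hadj_def by (metis neq0_conv)
  then have "vs \<noteq> []" "es \<noteq> []"
    using length_vs length_es by auto
  then have "last vs = vs ! (n - 1)" "hd vs = vs ! 0"
    using length_vs by (simp_all add: last_conv_nth hd_conv_nth)
  have "f \<in> set es"
  proof (rule ccontr)
    assume "f \<notin> set es"
    then have "berge_cycle V E n (es @ [f]) vs"
      using berge_path_close[OF path f(1)] f(2) \<open>last vs = _\<close> \<open>hd vs = _\<close> length_vs by auto
    then show False using assms(2) unfolding has_berge_cycle_def by blast
  qed
  then obtain j where j: "j < n - 1" "es ! j = f"
    using length_es by (auto simp: in_set_conv_nth)
  have "0 \<in> {j, Suc j} \<or> n - 1 \<in> {j, Suc j}"
    using path_edge_extra_vertex_unique[OF j(1), of 0 "n - 1"] j f \<open>0 < n - 1\<close> by auto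
  then have "j = 0 \<or> j = n - 2"
    using j(1) by auto
  then show ?thesis
  proof
    assume "j = 0"
    then have "last vs \<in> hd es"
      using j f \<open>last vs = _\<close> \<open>es \<noteq> []\<close> by (simp add: hd_conv_nth)
    then show ?thesis
      using berge_path_first_edge_cycle[OF path \<open>es \<noteq> []\<close>] length_es by simp
  next
    assume "j = n - 2"
    then have "hd vs \<in> last es"
      using j f \<open>hd vs = _\<close> \<open>es \<noteq> []\<close> length_es by (simp add: last_conv_nth numeral_2_eq_2)
    then show ?thesis
      using berge_path_last_edge_cycle[OF path \<open>es \<noteq> []\<close>] length_es by simp
  qed
qed

lemma card_crossing_indices:
  assumes "n + 2 \<le> shadow_deg V E (vs ! 0) + shadow_deg V E (vs ! (n - 1))"
  shows "3 \<le> card {i. i < n - 1 \<and> hadj E (vs ! 0) (vs ! Suc i) \<and> hadj E (vs ! (n - 1)) (vs ! i)}"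
proof -
  define I where "I = {i. i < n - 1 \<and> hadj E (vs ! 0) (vs ! Suc i)}"
  define J where "J = {i. i < n - 1 \<and> hadj E (vs ! (n - 1)) (vs ! i)}"
  have "Suc ` I = {k. k < n \<and> hadj E (vs ! 0) (vs ! k)}"
  proof (intro equalityI subsetI)
    fix k assume "k \<in> {k. k < n \<and> hadj E (vs ! 0) (vs ! k)}"
    moreover from this have "k \<noteq> 0" by (metis hadj_irrefl mem_Collect_eq)
    ultimately show "k \<in> Suc ` I"
      unfolding I_def by (auto simp: image_iff intro!: exI[of _ "k - 1"])
  qed (auto simp: I_def)
  then have "card I = shadow_deg V E (vs ! 0)"
    using shadow_deg_conv_indices[OF distinct_vs spanning] length_vs card_image[of Suc I] by simp
  moreover have "J = {k. k < n \<and> hadj E (vs ! (n - 1)) (vs ! k)}"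
  proof (intro equalityI subsetI)
    fix k assume k: "k \<in> {k. k < n \<and> hadj E (vs ! (n - 1)) (vs ! k)}"
    then have "k \<noteq> n - 1" by (metis hadj_irrefl mem_Collect_eq)
    with k show "k \<in> J" unfolding J_def by auto
  qed (auto simp: J_def)
  then have "card J = shadow_deg V E (vs ! (n - 1))"
    using shadow_deg_conv_indices[OF distinct_vs spanning] length_vs by simp
  moreover have "card (I \<union> J) \<le> n - 1"
    using card_mono[of "{..<n - 1}" "I \<union> J"] unfolding I_def J_def by auto
  moreover have "card I + card J = card (I \<union> J) + card (I \<inter> J)"
    by (rule card_Un_Int) (simp_all add: I_def J_def)
  moreover have "card (I \<inter> J) \<le> card (I \<union> J)"
    by (rule card_mono) (auto simp: I_def J_def)
  ultimately have "3 \<le> card (I \<inter> J)"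
    using assms by linarith
  moreover have "I \<inter> J =
      {i. i < n - 1 \<and> hadj E (vs ! 0) (vs ! Suc i) \<and> hadj E (vs ! (n - 1)) (vs ! i)}"
    unfolding I_def J_def by auto
  ultimately show ?thesis by simp
qed

lemma crossing_index:
  assumes nonadj: "\<not> hadj E (vs ! 0) (vs ! (n - 1))"
    and "n + 2 \<le> shadow_deg V E (vs ! 0) + shadow_deg V E (vs ! (n - 1))"
  obtains i where "0 < i" "i + 2 < n"
    "hadj E (vs ! 0) (vs ! Suc i)" "hadj E (vs ! (n - 1)) (vs ! i)"
    "vs ! Suc i \<notin> es ! 0" "vs ! i \<notin> es ! (n - 2)"
proof -
  define K where
    "K = {i. i < n - 1 \<and> hadj E (vs ! 0) (vs ! Suc i) \<and> hadj E (vs ! (n - 1)) (vs ! i)}"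
  have "3 \<le> card K"
    unfolding K_def using card_crossing_indices assms(2) .
  have K_range: "0 < i \<and> i + 2 < n" if "i \<in> K" for i
    using that nonadj hadj_commute[of E "vs ! (n - 1)" "vs ! 0"] unfolding K_def
    by (cases "i = 0"; cases "Suc i = n - 1") auto
  moreover obtain i0 where "i0 \<in> K"
    using \<open>3 \<le> card K\<close> by fastforce
  ultimately have "2 < n" by fastforce
  define B0 where "B0 = {i \<in> K. vs ! Suc i \<in> es ! 0}"
  define B1 where "B1 = {i \<in> K. vs ! i \<in> es ! (n - 2)}"
  have "card B0 \<le> 1"
    unfolding B0_def using \<open>2 < n\<close>
    by (intro card_path_edge_extra_vertices) (auto dest: K_range)
  have "card B1 \<le> 1"
    unfolding B1_def using \<open>2 < n\<close>
    by (intro card_path_edge_extra_vertices[of "n - 2" "\<lambda>i. i"]) (auto dest: K_range)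
  have "finite B0" "finite B1"
    by (simp_all add: B0_def B1_def K_def)
  then have "card K - card B0 \<le> card (K - B0)" "card (K - B0) - card B1 \<le> card (K - B0 - B1)"
    by (simp_all add: diff_card_le_card_Diff)
  then have "0 < card (K - B0 - B1)"
    using \<open>3 \<le> card K\<close> \<open>card B0 \<le> 1\<close> \<open>card B1 \<le> 1\<close> by linarith
  then obtain i where "i \<in> K" "i \<notin> B0" "i \<notin> B1"
    by (auto simp: card_gt_0_iff)
  then show thesis
    using that K_range by (auto simp: K_def B0_def B1_def)
qed

lemma crossing_index_cycle:
  assumes nonadj: "\<not> hadj E (vs ! 0) (vs ! (n - 1))"
    and i: "0 < i" "i + 2 < n"
    and adj: "hadj E (vs ! 0) (vs ! Suc i)" "hadj E (vs ! (n - 1)) (vs ! i)"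
    and "vs ! Suc i \<notin> es ! 0" "vs ! i \<notin> es ! (n - 2)"
  shows "has_berge_cycle V E n \<or> has_berge_cycle V E (n - 1) \<or> has_berge_cycle V E (n - 2)"
proof -
  obtain f where f: "f \<in> E" "vs ! 0 \<in> f" "vs ! Suc i \<in> f"
    using adj(1) unfolding hadj_def by auto
  obtain g where g: "g \<in> E" "vs ! (n - 1) \<in> g" "vs ! i \<in> g"
    using adj(2) unfolding hadj_def by auto
  have "f \<noteq> g"
    using nonadj f g distinct_vs length_vs i unfolding hadj_def by (auto simp: nth_eq_iff_index_eq)
  have f_only: "\<forall>j < length es. es ! j = f \<longrightarrow> Suc i \<in> {j, Suc j}"
    by (rule path_edge_at_vertex[of 0 "Suc i"]) (use f i \<open>vs ! Suc i \<notin> es ! 0\<close> in auto)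
  have "j = n - 2" if "j < n - 1" "n - 1 \<in> {j, Suc j}" for j
    using that by auto
  then have g_only: "\<forall>j < length es. es ! j = g \<longrightarrow> i \<in> {j, Suc j}"
    by (intro path_edge_at_vertex[of "n - 1" i]) (use g i \<open>vs ! i \<notin> es ! (n - 2)\<close> in auto)
  have "i < length es" "Suc i < length es"
    using i length_es by auto
  obtain a where a: "a = i - 1 \<or> a = i" "vs ! a \<in> g"
    "g \<notin> set (take a es)" "g \<notin> set (drop (Suc i) es)"
    using berge_path_attach_before[OF path i(1) \<open>i < length es\<close> g(3) g_only] by blast
  obtain b where b: "b = Suc i \<or> b = Suc (Suc i)" "vs ! b \<in> f"
    "f \<notin> set (take i es)" "f \<notin> set (drop b es)"
    using berge_path_attach_after[OF path \<open>Suc i < length es\<close> f(3) f_only] by auto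
  have "f \<notin> set (take a es)"
    using b(3) set_take_subset_set_take[of a i es] a(1) by auto
  moreover have "g \<notin> set (drop b es)"
    using a(4) set_drop_subset_set_drop[of "Suc i" b es] b(1) by auto
  moreover have "a < b" "b < n"
    using a(1) b(1) i by auto
  ultimately have "has_berge_cycle V E (a + 1 + (n - b))"
    using berge_path_crossing_cycle[OF path length_vs, of a b g f]
      a(2,3) b(2,4) f(1,2) g(1,2) \<open>f \<noteq> g\<close> by simp
  moreover have "a + 1 + (n - b) \<in> {n, n - 1, n - 2}"
    using a(1) b(1) i by auto
  ultimately show ?thesis by auto
qed

end

theorem claim2p1:
  fixes V :: "'a set" and E :: "'a set set" and n d0 :: nat
  assumes "d0 \<ge> 2" and "n \<ge> 6"
    and "is_3graph V E" and "card V = n"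
    and "\<forall>u\<in>V. \<forall>v\<in>V. u \<noteq> v \<and> \<not> hadj E u v \<longrightarrow>
           shadow_deg V E u + shadow_deg V E v \<ge> n + d0"
    and "ham_berge_path V E"
    and "\<not> has_berge_cycle V E n"
  shows "has_berge_cycle V E (n - 1) \<or> has_berge_cycle V E (n - 2)"
proof -
  obtain es vs where path: "berge_path V E es vs" and spanning: "set vs = V"
    using assms(6) unfolding ham_berge_path_def by auto
  then have "length vs = n"
    using distinct_card assms(4) unfolding berge_path_def by fastforce
  then interpret ham_path_3graph V E es vs n
    using assms(3) path spanning by unfold_locales
  show ?thesis
  proof (cases "hadj E (vs ! 0) (vs ! (n - 1))")
    case True
    then show ?thesis using adjacent_ends_cycle assms(7) by blast
  next
    case False
    have "vs ! 0 \<in> V" "vs ! (n - 1) \<in> V" "vs ! 0 \<noteq> vs ! (n - 1)"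
      using spanning length_vs distinct_vs assms(2) by (auto simp: nth_eq_iff_index_eq intro!: nth_mem)
    then have "n + 2 \<le> shadow_deg V E (vs ! 0) + shadow_deg V E (vs ! (n - 1))"
      using assms(1,5) False by fastforce
    then obtain i where "0 < i" "i + 2 < n"
      "hadj E (vs ! 0) (vs ! Suc i)" "hadj E (vs ! (n - 1)) (vs ! i)"
      "vs ! Suc i \<notin> es ! 0" "vs ! i \<notin> es ! (n - 2)"
      using crossing_index False by blast
    then show ?thesis
      using crossing_index_cycle False assms(7) by blast
  qed
qed

end
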